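(* Let $d \ge 1$ be an integer and let $n$ be an even integer with $n \ge 2d+2$, except that $n = 2d+4$ is excluded when $d$ is odd. Then a spherical 3-design on $S^d$ of size $n$ exists.
   Context: $S^d$ denotes the unit sphere in $\mathbb{R}^{d+1}$. A spherical $t$-design on $S^d$ of size $n$ is a finite collection $X$ of $n$ points of $S^d$ such that the average of every polynomial $f(x_0,\dots,x_d)$ of degree at most $t$ over $S^d$ (with respect to surface measure) equals $\frac{1}{|X|}\sum_{x\in X} f(x)$. *)

theory Defs
  imports "HOL-Analysis.Analysis"
begin

text \<open>Points of S^d live in real^'n with CARD('n) = d+1.
  A polynomial function of degree at most t in the coordinates x_i:
  a finite linear combination of monomials prod_i x_i^(alpha i) with
  total degree sum_i alpha i at most t.\<close>
definition poly_fun_deg_le :: "nat \<Rightarrow> (real^'n::finite \<Rightarrow> real) \<Rightarrow> bool" where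
  "poly_fun_deg_le t f \<longleftrightarrow>
     (\<exists>(A :: ('n \<Rightarrow> nat) set) (c :: ('n \<Rightarrow> nat) \<Rightarrow> real).
        finite A \<and> (\<forall>\<alpha>\<in>A. (\<Sum>i\<in>UNIV. \<alpha> i) \<le> t) \<and>
        (\<forall>x. f x = (\<Sum>\<alpha>\<in>A. c \<alpha> * (\<Prod>i\<in>UNIV. (x $ i) ^ (\<alpha> i)))))"

text \<open>Average of f over the unit sphere with respect to (normalized) surface
  measure, expressed via the cone measure: the normalized surface measure on
  the sphere is the push-forward of normalized Lebesgue measure on the unit
  ball under x \<mapsto> x / norm x.\<close>
definition sphere_avg :: "(real^'n::finite \<Rightarrow> real) \<Rightarrow> real" where
  "sphere_avg f =
     (LINT x : ball 0 1 | lebesgue. f (x /\<^sub>R norm x)) / measure lebesgue (ball (0::real^'n) 1)"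

definition spherical_design :: "nat \<Rightarrow> (real^'n::finite) set \<Rightarrow> bool" where
  "spherical_design t X \<longleftrightarrow>
     finite X \<and> X \<noteq> {} \<and> X \<subseteq> sphere 0 1 \<and>
     (\<forall>f. poly_fun_deg_le t f \<longrightarrow> sphere_avg f = (\<Sum>x\<in>X. f x) / real (card X))"

end

theory Submission
  imports Defs
begin

text \<open>Let Y be m = n/2 unit vectors in R^(d+1), no two of them antipodal, forming a tight frame:
  the sum of y y^T over Y is (m/(d+1)) I.  Then X = Y \<union> -Y is a spherical 3-design.  Monomials
  of odd degree sum to zero over X by antipodality, and average to zero over the sphere because
  some exponent is odd and the reflection in that coordinate preserves the sphere measure.  In
  degree 2, the tight frame gives the moments of x_i x_k over X as \<delta>_ik/(d+1), and permutation and
  reflection invariance of the sphere measure give the same averages.  Tight frames of m \<ge> d+1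
  non-antipodal unit vectors are provided by harmonic frames, whose tightness reduces to the
  vanishing of sums of nontrivial m-th roots of unity.\<close>

section \<open>Invariance of Lebesgue measure under coordinate symmetries\<close>

lemma prod_inner_Basis_vec: "(\<Prod>b\<in>Basis. x \<bullet> b) = (\<Prod>i\<in>UNIV. x $ i)"
  for x :: "real^'n::finite"
proof -
  have Basis: "Basis = range (\<lambda>i. axis i (1::real))"
    by (auto simp: Basis_vec_def)
  have "inj (\<lambda>i. axis i (1::real))"
    by (auto simp: inj_def axis_eq_axis)
  from prod.reindex[OF this, of "(\<bullet>) x"] show ?thesis
    unfolding Basis by (simp add: cart_eq_inner_axis)
qed

lemma emeasure_lborel_box_cart:
  fixes l u :: "real^'n::finite"
  assumes "\<And>i. l $ i \<le> u $ i"
  shows "emeasure lborel (box l u) = (\<Prod>i\<in>UNIV. u $ i - l $ i)"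
proof -
  have "\<forall>b\<in>Basis. l \<bullet> b \<le> u \<bullet> b"
    using assms by (auto simp: Basis_vec_def cart_eq_inner_axis)
  then show ?thesis
    by (simp add: emeasure_lborel_box_eq prod_inner_Basis_vec del: Basis_vec_def)
qed

lemma lborel_eqI_cart:
  fixes M :: "(real^'n::finite) measure"
  assumes "sets M = sets borel"
    and "\<And>l u. (\<And>i. l $ i \<le> u $ i) \<Longrightarrow> emeasure M (box l u) = (\<Prod>i\<in>UNIV. u $ i - l $ i)"
  shows "M = lborel"
proof (rule lborel_eqI[symmetric])
  fix l u :: "real^'n"
  assume "\<And>b. b \<in> Basis \<Longrightarrow> l \<bullet> b \<le> u \<bullet> b"
  then have "l $ i \<le> u $ i" for i
    by (force simp: cart_eq_inner_axis Basis_vec_def)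
  then show "emeasure M (box l u) = (\<Prod>b\<in>Basis. (u - l) \<bullet> b)"
    using assms(2) by (simp add: prod_inner_Basis_vec del: Basis_vec_def)
qed (use assms(1) in simp)

lemma lborel_distr_permute_coordinates:
  fixes p :: "'n::finite \<Rightarrow> 'n"
  assumes "bij p"
  shows "distr lborel borel (\<lambda>x::real^'n. \<chi> j. x $ p j) = lborel"
proof (rule lborel_eqI_cart)
  let ?P = "\<lambda>x::real^'n. \<chi> j. x $ p j" and ?q = "inv p"
  have pq: "p (?q k) = k" and qp: "?q (p k) = k" for k
    using assms by (simp_all add: bij_is_surj surj_f_inv_f bij_is_inj inv_f_f)
  have [measurable]: "?P \<in> borel_measurable borel"
    by (intro borel_measurable_continuous_onI continuous_intros)
  fix l u :: "real^'n"
  assume le: "\<And>i. l $ i \<le> u $ i"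
  have "(\<forall>j. l $ j < x $ p j \<and> x $ p j < u $ j) \<longleftrightarrow> (\<forall>k. l $ ?q k < x $ k \<and> x $ k < u $ ?q k)" for x
    by (metis pq qp)
  then have "?P -` box l u = box (\<chi> k. l $ ?q k) (\<chi> k. u $ ?q k)"
    by (simp add: mem_box_cart set_eq_iff)
  then have "emeasure (distr lborel borel ?P) (box l u) = emeasure lborel (box (\<chi> k. l $ ?q k) (\<chi> k. u $ ?q k))"
    by (simp add: emeasure_distr)
  also have "\<dots> = (\<Prod>k\<in>UNIV. u $ ?q k - l $ ?q k)"
    using emeasure_lborel_box_cart[of "\<chi> k. l $ ?q k" "\<chi> k. u $ ?q k"] le by simp
  also have "\<dots> = (\<Prod>k\<in>UNIV. u $ k - l $ k)"
    using prod.reindex_bij_betw[of ?q UNIV UNIV "\<lambda>k. u $ k - l $ k"] assms by (simp add: bij_imp_bij_inv)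
  finally show "emeasure (distr lborel borel ?P) (box l u) = (\<Prod>k\<in>UNIV. u $ k - l $ k)" .
qed simp

lemma lborel_distr_reflect_coordinate:
  fixes k :: "'n::finite"
  shows "distr lborel borel (\<lambda>x::real^'n. \<chi> j. if j = k then - x $ j else x $ j) = lborel"
proof (rule lborel_eqI_cart)
  let ?F = "\<lambda>x::real^'n. \<chi> j. if j = k then - x $ j else x $ j"
  have "linear ?F"
    by (auto simp: linear_iff vec_eq_iff)
  then have [measurable]: "?F \<in> borel_measurable borel"
    by (intro borel_measurable_continuous_onI linear_continuous_on) (simp add: linear_linear)
  fix l u :: "real^'n"
  assume le: "\<And>i. l $ i \<le> u $ i"
  let ?l = "\<chi> j. if j = k then - u $ j else l $ j" and ?u = "\<chi> j. if j = k then - l $ j else u $ j"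
  have "l $ j < ?F x $ j \<and> ?F x $ j < u $ j \<longleftrightarrow> ?l $ j < x $ j \<and> x $ j < ?u $ j" for x j
    by (cases "j = k") auto
  then have "?F -` box l u = box ?l ?u"
    by (simp add: mem_box_cart set_eq_iff)
  then have "emeasure (distr lborel borel ?F) (box l u) = emeasure lborel (box ?l ?u)"
    by (simp add: emeasure_distr)
  also have "\<dots> = (\<Prod>i\<in>UNIV. ?u $ i - ?l $ i)"
    by (rule emeasure_lborel_box_cart) (use le in auto)
  also have "(\<Prod>i\<in>UNIV. ?u $ i - ?l $ i) = (\<Prod>i\<in>UNIV. u $ i - l $ i)"
    by (rule prod.cong) auto
  finally show "emeasure (distr lborel borel ?F) (box l u) = (\<Prod>i\<in>UNIV. u $ i - l $ i)" .
qed simp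

section \<open>Averages over the sphere\<close>

definition cone_extension :: "(real^'n::finite \<Rightarrow> real) \<Rightarrow> real^'n \<Rightarrow> real" where
  "cone_extension h x = indicator (ball 0 1) x * h (x /\<^sub>R norm x)"

lemma borel_measurable_cone_extension [measurable]:
  fixes h :: "real^'n::finite \<Rightarrow> real"
  assumes [measurable]: "h \<in> borel_measurable borel"
  shows "cone_extension h \<in> borel_measurable borel"
proof -
  have "(\<lambda>x::real^'n. x /\<^sub>R norm x) \<in> borel_measurable borel"
    by measurable
  then have "(\<lambda>x. h (x /\<^sub>R norm x)) \<in> borel_measurable borel"
    by measurable
  then show ?thesis
    unfolding cone_extension_def[abs_def] by (intro borel_measurable_times borel_measurable_indicator) auto
qed

lemma integrable_cone_extension:
  fixes h :: "real^'n::finite \<Rightarrow> real"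
  assumes "continuous_on UNIV h"
  shows "integrable lborel (cone_extension h)"
proof -
  have [measurable]: "h \<in> borel_measurable borel"
    using assms by (rule borel_measurable_continuous_onI)
  have "bounded (h ` cball 0 1)"
    by (intro compact_imp_bounded compact_continuous_image continuous_on_subset[OF assms]) auto
  then obtain B where B: "\<forall>y\<in>cball 0 1. norm (h y) \<le> B"
    unfolding bounded_iff by auto
  have "x /\<^sub>R norm x \<in> cball 0 1" for x :: "real^'n"
    by (cases "x = 0") auto
  then have "AE x in lborel. x \<in> ball 0 1 \<longrightarrow> norm (h (x /\<^sub>R norm x)) \<le> B"
    using B by blast
  moreover have "emeasure lborel (ball (0::real^'n) 1) < \<infinity>"
    using emeasure_bounded_finite[of "ball (0::real^'n) 1"] by (simp add: less_top)
  ultimately have "integrable lborel (\<lambda>x. indicator (ball 0 1) x *\<^sub>R h (x /\<^sub>R norm x))"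
    by (intro integrableI_bounded_set_indicator) auto
  then show ?thesis
    by (simp add: cone_extension_def[abs_def])
qed

lemma sphere_avg_eq_lborel:
  fixes h :: "real^'n::finite \<Rightarrow> real"
  assumes "h \<in> borel_measurable borel"
  shows "sphere_avg h = integral\<^sup>L lborel (cone_extension h) / measure lborel (ball (0::real^'n) 1)"
proof -
  have "sphere_avg h = integral\<^sup>L lebesgue (cone_extension h) / measure lborel (ball (0::real^'n) 1)"
    by (simp add: sphere_avg_def set_lebesgue_integral_def cone_extension_def[abs_def])
  then show ?thesis
    using assms by (simp add: integral_completion)
qed

lemma sphere_avg_const [simp]: "sphere_avg (\<lambda>_::real^'n::finite. c) = c"
proof -
  have "0 < measure lborel (ball (0::real^'n) 1)"
    using content_ball_pos[of 1 "0::real^'n"] by simp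
  moreover have "cone_extension (\<lambda>_. c) = (\<lambda>x::real^'n. indicator (ball 0 1) x * c)"
    by (simp add: cone_extension_def[abs_def])
  ultimately show ?thesis
    by (simp add: sphere_avg_eq_lborel emeasure_bounded_finite)
qed

lemma sphere_avg_mult_left: "sphere_avg (\<lambda>x. c * f x) = c * sphere_avg f"
  by (simp add: sphere_avg_def)

lemma sphere_avg_minus: "sphere_avg (\<lambda>x. - f x) = - sphere_avg f"
  using sphere_avg_mult_left[of "- 1" f] by simp

lemma sphere_avg_sum:
  fixes g :: "'a \<Rightarrow> real^'n::finite \<Rightarrow> real"
  assumes "\<And>\<alpha>. \<alpha> \<in> A \<Longrightarrow> continuous_on UNIV (g \<alpha>)"
  shows "sphere_avg (\<lambda>x. \<Sum>\<alpha>\<in>A. g \<alpha> x) = (\<Sum>\<alpha>\<in>A. sphere_avg (g \<alpha>))"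
proof (cases "finite A")
  case True
  have [measurable]: "g \<alpha> \<in> borel_measurable borel" if "\<alpha> \<in> A" for \<alpha>
    using assms[OF that] by (rule borel_measurable_continuous_onI)
  have "cone_extension (\<lambda>x. \<Sum>\<alpha>\<in>A. g \<alpha> x) = (\<lambda>x. \<Sum>\<alpha>\<in>A. cone_extension (g \<alpha>) x)"
    by (simp add: cone_extension_def[abs_def] sum_distrib_left)
  then show ?thesis
    by (simp add: sphere_avg_eq_lborel integrable_cone_extension assms sum_divide_distrib)
qed simp

lemma sphere_avg_cong:
  fixes f g :: "real^'n::finite \<Rightarrow> real"
  assumes "f \<in> borel_measurable borel" "g \<in> borel_measurable borel"
    and "\<And>x. x \<in> sphere 0 1 \<Longrightarrow> f x = g x"
  shows "sphere_avg f = sphere_avg g"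
proof -
  have "AE x in lborel. cone_extension f x = cone_extension g x"
    using AE_lborel_singleton[of 0] by eventually_elim (simp add: cone_extension_def assms(3))
  then have "integral\<^sup>L lborel (cone_extension f) = integral\<^sup>L lborel (cone_extension g)"
    using assms(1,2) by (intro integral_cong_AE) auto
  then show ?thesis
    using assms(1,2) by (simp add: sphere_avg_eq_lborel)
qed

text \<open>Every orthogonal transformation preserves Lebesgue measure; the second hypothesis is only
  verified below for the coordinate permutations and reflections that are needed.\<close>

lemma sphere_avg_comp_orthogonal_transformation:
  fixes T :: "real^'n::finite \<Rightarrow> real^'n"
  assumes T: "orthogonal_transformation T" "distr lborel borel T = lborel"
    and [measurable]: "h \<in> borel_measurable borel"
  shows "sphere_avg (\<lambda>x. h (T x)) = sphere_avg h"
proof -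
  have [measurable]: "T \<in> borel_measurable borel"
    using T(1) by (intro borel_measurable_continuous_onI linear_continuous_on)
      (simp add: orthogonal_transformation_linear linear_linear)
  have "integral\<^sup>L lborel (cone_extension h) = integral\<^sup>L (distr lborel borel T) (cone_extension h)"
    using T(2) by simp
  also have "\<dots> = (\<integral>x. cone_extension h (T x) \<partial>lborel)"
    by (rule integral_distr) auto
  also have "\<dots> = integral\<^sup>L lborel (cone_extension (\<lambda>y. h (T y)))"
  proof -
    have "T (x /\<^sub>R norm x) = T x /\<^sub>R norm x" for x
      using orthogonal_transformation_scaleR[OF T(1), of "inverse (norm x)" x] by simp
    then show ?thesis
      using T(1) by (simp add: cone_extension_def[abs_def] orthogonal_transformation_norm indicator_def)
  qed
  finally show ?thesis
    by (simp add: sphere_avg_eq_lborel)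
qed

section \<open>Sphere averages of monomials\<close>

lemma sphere_avg_permute_coordinates:
  fixes h :: "real^'n::finite \<Rightarrow> real" and p :: "'n \<Rightarrow> 'n"
  assumes "bij p" "h \<in> borel_measurable borel"
  shows "sphere_avg (\<lambda>x. h (\<chi> j. x $ p j)) = sphere_avg h"
proof (rule sphere_avg_comp_orthogonal_transformation[where T = "\<lambda>x. \<chi> j. x $ p j"])
  have "(\<Sum>j\<in>UNIV. v $ p j * w $ p j) = (\<Sum>j\<in>UNIV. v $ j * w $ j)" for v w :: "real^'n"
    using sum.reindex_bij_betw[of p UNIV UNIV "\<lambda>j. v $ j * w $ j"] assms(1) by simp
  moreover have "linear (\<lambda>x::real^'n. \<chi> j. x $ p j)"
    by (simp add: linear_iff vec_eq_iff)
  ultimately show "orthogonal_transformation (\<lambda>x::real^'n. \<chi> j. x $ p j)"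
    by (simp add: orthogonal_transformation_def inner_vec_def)
qed (use assms lborel_distr_permute_coordinates in auto)

lemma sphere_avg_reflect_coordinate:
  fixes h :: "real^'n::finite \<Rightarrow> real"
  assumes "h \<in> borel_measurable borel"
  shows "sphere_avg (\<lambda>x. h (\<chi> j. if j = k then - x $ j else x $ j)) = sphere_avg h"
proof (rule sphere_avg_comp_orthogonal_transformation[where T = "\<lambda>x. \<chi> j. if j = k then - x $ j else x $ j"])
  have "(\<Sum>j\<in>UNIV. (if j = k then - v $ j else v $ j) * (if j = k then - w $ j else w $ j))
      = (\<Sum>j\<in>UNIV. v $ j * w $ j)" for v w :: "real^'n"
    by (intro sum.cong) auto
  moreover have "linear (\<lambda>x::real^'n. \<chi> j. if j = k then - x $ j else x $ j)"
    by (simp add: linear_iff vec_eq_iff)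
  ultimately show "orthogonal_transformation (\<lambda>x::real^'n. \<chi> j. if j = k then - x $ j else x $ j)"
    by (simp add: orthogonal_transformation_def inner_vec_def)
qed (use assms lborel_distr_reflect_coordinate in auto)

lemma sphere_avg_eq_0_if_odd_in_coordinate:
  fixes h :: "real^'n::finite \<Rightarrow> real"
  assumes "h \<in> borel_measurable borel"
    and "\<And>x. h (\<chi> j. if j = k then - x $ j else x $ j) = - h x"
  shows "sphere_avg h = 0"
proof -
  have "sphere_avg h = sphere_avg (\<lambda>x. h (\<chi> j. if j = k then - x $ j else x $ j))"
    by (rule sphere_avg_reflect_coordinate[symmetric, OF assms(1)])
  also have "\<dots> = sphere_avg (\<lambda>x. - h x)"
    by (simp only: assms(2))
  also have "\<dots> = - sphere_avg h"
    by (rule sphere_avg_minus)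
  finally show ?thesis
    by simp
qed

lemma sphere_avg_coordinate_square: "sphere_avg (\<lambda>x::real^'n::finite. (x $ i)\<^sup>2) = 1 / CARD('n)"
proof -
  have same: "sphere_avg (\<lambda>x::real^'n. (x $ k)\<^sup>2) = sphere_avg (\<lambda>x::real^'n. (x $ i)\<^sup>2)" for k
    using sphere_avg_permute_coordinates[of "Transposition.transpose i k" "\<lambda>x::real^'n. (x $ i)\<^sup>2"]
    by simp
  have "real CARD('n) * sphere_avg (\<lambda>x::real^'n. (x $ i)\<^sup>2) = (\<Sum>k\<in>UNIV. sphere_avg (\<lambda>x::real^'n. (x $ k)\<^sup>2))"
  proof -
    have "(\<Sum>k\<in>UNIV. sphere_avg (\<lambda>x::real^'n. (x $ k)\<^sup>2)) = (\<Sum>k\<in>(UNIV::'n set). sphere_avg (\<lambda>x::real^'n. (x $ i)\<^sup>2))"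
      by (intro sum.cong refl same)
    then show ?thesis
      by simp
  qed
  also have "\<dots> = sphere_avg (\<lambda>x::real^'n. \<Sum>k\<in>UNIV. (x $ k)\<^sup>2)"
    by (rule sphere_avg_sum[symmetric]) (intro continuous_intros)
  also have "\<dots> = sphere_avg (\<lambda>_::real^'n. 1)"
    by (rule sphere_avg_cong) (auto simp: norm_eq_1 inner_vec_def power2_eq_square)
  finally show ?thesis
    by (simp add: field_simps)
qed

lemma sphere_avg_coordinate_product:
  "sphere_avg (\<lambda>x::real^'n::finite. x $ i * x $ k) = (if i = k then 1 / CARD('n) else 0)"
proof (cases "i = k")
  case True
  then show ?thesis
    using sphere_avg_coordinate_square[of i] by (simp add: power2_eq_square)
next
  case False
  have "sphere_avg (\<lambda>x::real^'n. x $ i * x $ k) = 0"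
  proof (rule sphere_avg_eq_0_if_odd_in_coordinate[of _ i])
    show "(\<lambda>x::real^'n. x $ i * x $ k) \<in> borel_measurable borel"
      by measurable
    show "(\<chi> j. if j = i then - x $ j else x $ j) $ i * (\<chi> j. if j = i then - x $ j else x $ j) $ k
        = - (x $ i * x $ k)" for x :: "real^'n"
      using False by simp
  qed
  with False show ?thesis
    by simp
qed

definition monomial :: "('n::finite \<Rightarrow> nat) \<Rightarrow> real^'n \<Rightarrow> real" where
  "monomial a x = (\<Prod>i\<in>UNIV. x $ i ^ a i)"

lemma continuous_on_monomial [continuous_intros]: "continuous_on S (monomial a)"
  unfolding monomial_def[abs_def] by (intro continuous_intros)

lemma monomial_scale_coordinates:
  "monomial a (\<chi> j. s j * x $ j) = (\<Prod>j\<in>UNIV. s j ^ a j) * monomial a x"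
  by (simp add: monomial_def power_mult_distrib prod.distrib)

lemma monomial_uminus: "monomial a (- x) = (- 1) ^ (\<Sum>j\<in>UNIV. a j) * monomial a x"
proof -
  have "monomial a (- x) = monomial a (\<chi> j. - 1 * x $ j)"
    by (rule arg_cong[where f = "monomial a"]) (simp add: vec_eq_iff)
  also have "\<dots> = (- 1) ^ (\<Sum>j\<in>UNIV. a j) * monomial a x"
    by (simp only: monomial_scale_coordinates power_sum)
  finally show ?thesis .
qed

lemma monomial_reflect_coordinate:
  "monomial a (\<chi> j. if j = k then - x $ j else x $ j) = (- 1) ^ a k * monomial a x"
proof -
  have "monomial a (\<chi> j. if j = k then - x $ j else x $ j) = monomial a (\<chi> j. (if j = k then - 1 else 1) * x $ j)"
    by (rule arg_cong[where f = "monomial a"]) (simp add: vec_eq_iff)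
  also have "\<dots> = (\<Prod>j\<in>UNIV. if j = k then (- 1) ^ a j else 1) * monomial a x"
    by (simp only: monomial_scale_coordinates if_distrib[of "\<lambda>c. c ^ _"] power_one)
  finally show ?thesis
    by (simp add: prod.delta)
qed

lemma sphere_avg_monomial_odd:
  assumes "odd (a k)"
  shows "sphere_avg (monomial a) = 0"
proof (rule sphere_avg_eq_0_if_odd_in_coordinate[of _ k])
  show "monomial a \<in> borel_measurable borel"
    by (intro borel_measurable_continuous_onI continuous_on_monomial)
  show "monomial a (\<chi> j. if j = k then - x $ j else x $ j) = - monomial a x" for x
    using assms by (simp add: monomial_reflect_coordinate)
qed

lemma monomial_eq_prod_support:
  assumes "\<And>j. j \<notin> S \<Longrightarrow> a j = 0"
  shows "monomial a x = (\<Prod>j\<in>S. x $ j ^ a j)"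
  unfolding monomial_def using assms by (intro prod.mono_neutral_right) auto

lemma monomial_degree_two:
  fixes a :: "'n::finite \<Rightarrow> nat"
  assumes "(\<Sum>j\<in>UNIV. a j) = 2"
  obtains i k where "monomial a = (\<lambda>x. x $ i * x $ k)"
proof -
  obtain i where "a i \<noteq> 0"
    using assms by (metis sum.neutral zero_neq_numeral)
  moreover have "a i \<le> 2"
    using assms member_le_sum[of i UNIV a] by simp
  ultimately consider "a i = 2" | "a i = 1"
    by linarith
  moreover have rest: "(\<Sum>j\<in>UNIV - {i}. a j) = 2 - a i"
    using assms by (simp add: sum.remove[of UNIV i])
  ultimately show thesis
  proof cases
    case 1
    then have "a j = 0" if "j \<notin> {i}" for j
      using rest that by (simp add: sum_eq_0_iff)
    then have "monomial a x = x $ i * x $ i" for x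
      using 1 monomial_eq_prod_support[of "{i}" a x] by (simp add: power2_eq_square)
    then show thesis
      using that by blast
  next
    case 2
    then have "\<exists>k\<in>UNIV - {i}. a k = 1 \<and> (\<forall>j\<in>UNIV - {i}. k \<noteq> j \<longrightarrow> a j = 0)"
      using rest by (subst sum_eq_1_iff[symmetric]) auto
    then obtain k where k: "k \<noteq> i" "a k = 1" and "\<forall>j\<in>UNIV - {i}. k \<noteq> j \<longrightarrow> a j = 0"
      by blast
    then have "a j = 0" if "j \<notin> {i, k}" for j
      using that by auto
    then have "monomial a x = x $ i * x $ k" for x
      using k 2 monomial_eq_prod_support[of "{i, k}" a x] by simp
    then show thesis
      using that by blast
  qed
qed

section \<open>Antipodal tight frames are spherical 3-designs\<close>

lemma spherical_designI_monomial:
  fixes X :: "(real^'n::finite) set"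
  assumes "finite X" "X \<noteq> {}" "X \<subseteq> sphere 0 1"
    and "\<And>a. (\<Sum>i\<in>UNIV. a i) \<le> t \<Longrightarrow> sphere_avg (monomial a) = (\<Sum>x\<in>X. monomial a x) / card X"
  shows "spherical_design t X"
  unfolding spherical_design_def
proof (intro conjI allI impI assms(1-3))
  fix f :: "real^'n \<Rightarrow> real"
  assume "poly_fun_deg_le t f"
  then obtain A c where deg: "\<forall>\<alpha>\<in>A. (\<Sum>i\<in>UNIV. \<alpha> i) \<le> t"
    and "\<forall>x. f x = (\<Sum>\<alpha>\<in>A. c \<alpha> * (\<Prod>i\<in>UNIV. x $ i ^ \<alpha> i))"
    unfolding poly_fun_deg_le_def by blast
  then have f: "f = (\<lambda>x. \<Sum>\<alpha>\<in>A. c \<alpha> * monomial \<alpha> x)"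
    by (simp add: fun_eq_iff monomial_def)
  have "continuous_on UNIV (\<lambda>x. c \<alpha> * monomial \<alpha> x)" for \<alpha>
    by (intro continuous_intros)
  then have "sphere_avg f = (\<Sum>\<alpha>\<in>A. sphere_avg (\<lambda>x. c \<alpha> * monomial \<alpha> x))"
    unfolding f by (intro sphere_avg_sum)
  also have "\<dots> = (\<Sum>\<alpha>\<in>A. c \<alpha> * ((\<Sum>x\<in>X. monomial \<alpha> x) / card X))"
    using deg assms(4) by (simp add: sphere_avg_mult_left)
  also have "\<dots> = (\<Sum>x\<in>X. f x) / card X"
    unfolding f by (simp add: sum_divide_distrib sum_distrib_left sum.swap[of _ A])
  finally show "sphere_avg f = (\<Sum>x\<in>X. f x) / real (card X)" .
qed

definition tight_frame :: "(real^'n::finite) set \<Rightarrow> bool" where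
  "tight_frame Y \<longleftrightarrow> (\<exists>c. \<forall>i k. (\<Sum>y\<in>Y. y $ i * y $ k) = (if i = k then c else 0))"

lemma unit_tight_frame_constant:
  fixes Y :: "(real^'n::finite) set"
  assumes "finite Y" "Y \<subseteq> sphere 0 1" "tight_frame Y"
  shows "(\<Sum>y\<in>Y. y $ i * y $ k) = (if i = k then card Y / CARD('n) else 0)"
proof -
  obtain c where c: "\<And>i k. (\<Sum>y\<in>Y. y $ i * y $ k) = (if i = k then c else 0)"
    using assms(3) unfolding tight_frame_def by blast
  have "real (card Y) = (\<Sum>y\<in>Y. y \<bullet> y)"
    using assms(2) by (simp add: norm_eq_1 subset_iff)
  also have "\<dots> = (\<Sum>i\<in>UNIV. \<Sum>y\<in>Y. y $ i * y $ i)"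
    by (simp add: inner_vec_def sum.swap[of _ Y])
  also have "\<dots> = CARD('n) * c"
    by (simp add: c)
  finally show ?thesis
    by (simp add: c)
qed

lemma card_antipodal_union:
  fixes Y :: "'a::ab_group_add set"
  assumes "finite Y" "Y \<inter> uminus ` Y = {}"
  shows "card (Y \<union> uminus ` Y) = 2 * card Y"
proof -
  have "inj_on uminus Y"
    by (simp add: inj_on_def)
  with assms show ?thesis
    by (simp add: card_Un_disjoint card_image)
qed

lemma antipodal_tight_frame_spherical_design:
  fixes Y :: "(real^'n::finite) set"
  assumes "finite Y" "Y \<noteq> {}" "Y \<subseteq> sphere 0 1" "Y \<inter> uminus ` Y = {}" "tight_frame Y"
  shows "spherical_design 3 (Y \<union> uminus ` Y)"
proof (rule spherical_designI_monomial)
  let ?X = "Y \<union> uminus ` Y"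
  have inj: "inj_on uminus Y"
    by (simp add: inj_on_def)
  have card: "card ?X = 2 * card Y"
    using assms(1,4) by (rule card_antipodal_union)
  fix a :: "'n \<Rightarrow> nat"
  let ?deg = "\<Sum>i\<in>UNIV. a i"
  assume deg: "?deg \<le> 3"
  have "odd N \<or> N = 0 \<or> N = 2" if "N \<le> 3" for N :: nat
    using that by presburger
  from this[OF deg] consider "odd ?deg" | "?deg = 0" | "?deg = 2"
    by auto
  moreover have sum_X: "(\<Sum>x\<in>?X. monomial a x) = (1 + (- 1) ^ ?deg) * (\<Sum>y\<in>Y. monomial a y)"
  proof -
    have "(\<Sum>x\<in>?X. monomial a x) = (\<Sum>y\<in>Y. monomial a y) + (\<Sum>y\<in>Y. monomial a (- y))"
      using assms(1,4) inj by (simp add: sum.union_disjoint sum.reindex)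
    then show ?thesis
      by (simp add: monomial_uminus sum_distrib_left distrib_right sum.distrib)
  qed
  ultimately show "sphere_avg (monomial a) = (\<Sum>x\<in>?X. monomial a x) / card ?X"
  proof cases
    case 1
    then obtain k where "odd (a k)"
      using even_sum_iff[of UNIV a] by force
    then show ?thesis
      using 1 sum_X by (simp add: sphere_avg_monomial_odd)
  next
    case 2
    then have "monomial a = (\<lambda>_. 1)"
      by (simp add: monomial_def fun_eq_iff)
    then show ?thesis
      using 2 sum_X card assms(1,2) by simp
  next
    case 3
    then obtain i k where "monomial a = (\<lambda>x. x $ i * x $ k)"
      by (rule monomial_degree_two)
    then show ?thesis
      using 3 sum_X card assms(1,2)
      by (simp add: sphere_avg_coordinate_product unit_tight_frame_constant assms(3,5))
  qed
qed (use assms in auto)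

section \<open>Harmonic frames\<close>

lemma sum_cos_equidistant_eq_0:
  fixes m :: nat and z :: int
  assumes m: "0 < m" and nd: "\<not> int m dvd z"
  shows "(\<Sum>t<m. cos (2 * pi * t * z / m - c)) = 0"
proof -
  define w where "w = cis (2 * pi * z / m)"
  have pow: "cis (2 * pi * t * z / m - c) = w ^ t * cis (- c)" for t :: nat
    by (simp add: w_def Complex.DeMoivre cis_mult algebra_simps)
  have "w ^ m = 1"
    using m by (simp add: w_def Complex.DeMoivre cis_multiple_2pi)
  moreover have "w \<noteq> 1"
  proof
    assume "w = 1"
    then have "cos (2 * pi * z / m) = 1"
      by (metis w_def cis.sel(1) one_complex.sel(1))
    then obtain n :: int where "2 * pi * z / m = real_of_int n * 2 * pi"
      unfolding cos_one_2pi_int by blast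
    then have "z = n * int m"
      using m by (simp add: field_simps) (metis of_int_eq_iff of_int_mult of_int_of_nat_eq)
    then show False
      using nd by simp
  qed
  ultimately have "(\<Sum>t<m. w ^ t) = 0"
    by (simp add: geometric_sum)
  then have "(\<Sum>t<m. cis (2 * pi * t * z / m - c)) = 0"
    by (simp add: pow flip: sum_distrib_right)
  then have "Re (\<Sum>t<m. cis (2 * pi * t * z / m - c)) = 0"
    by simp
  then show ?thesis
    by (simp add: Re_sum)
qed

lemma sum_cos_mul_cos_equidistant:
  fixes p q m :: nat
  assumes "even (p + q)" "0 < p + q" "p + q < 2 * m"
  shows "(\<Sum>t<m. cos (pi * t * p / m - c) * cos (pi * t * q / m - c'))
      = (if p = q then m / 2 * cos (c - c') else 0)"
proof -
  obtain s :: nat where s: "p + q = 2 * s"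
    using assms(1) by (rule evenE)
  have "even (int p - int q)"
    using assms(1) by (simp add: even_diff)
  then obtain d :: int where d: "int p - int q = 2 * d"
    by (rule evenE)
  have "real p + real q = 2 * real s" "real p - real q = 2 * real_of_int d"
    using arg_cong[OF s, of real] arg_cong[OF d, of real_of_int] by simp_all
  then have pq: "real p = s + d" "real q = s - d"
    by linarith+
  have prod: "cos (pi * t * p / m - c) * cos (pi * t * q / m - c')
      = (cos (2 * pi * t * d / m - (c - c')) + cos (2 * pi * t * int s / m - (c + c'))) / 2" for t :: nat
  proof -
    have "(pi * t * p / m - c) - (pi * t * q / m - c') = 2 * pi * t * d / m - (c - c')"
      and "(pi * t * p / m - c) + (pi * t * q / m - c') = 2 * pi * t * int s / m - (c + c')"
      by (simp_all add: pq add_divide_distrib diff_divide_distrib algebra_simps)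
    then show ?thesis
      by (simp only: cos_times_cos)
  qed
  have m: "0 < m" and s: "0 < int s" "int s < int m" and d: "\<bar>d\<bar> < int m" "d = 0 \<longleftrightarrow> p = q"
    using assms s d by auto
  have "(\<Sum>t<m. cos (2 * pi * t * int s / m - (c + c'))) = 0"
    using s by (intro sum_cos_equidistant_eq_0[OF m]) (auto dest: zdvd_imp_le)
  moreover have "(\<Sum>t<m. cos (2 * pi * t * d / m - (c - c'))) = (if p = q then m * cos (c - c') else 0)"
  proof (cases "p = q")
    case False
    then have "\<not> int m dvd d"
      using d by (metis dvd_abs_iff zdvd_imp_le zero_less_abs_iff not_le)
    with False show ?thesis
      by (simp add: sum_cos_equidistant_eq_0[OF m])
  qed (use d cos_minus[of "c - c'"] in simp)
  ultimately show ?thesis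
    by (simp add: prod sum_divide_distrib[symmetric] sum.distrib)
qed

text \<open>harmonic_frame D m t r is coordinate r of vector t < m of a tight frame of m unit vectors
  in dimension D.  Coordinates 2j and 2j+1 are sqrt(2/D) times the cosine and the sine (a cosine
  shifted by pi/2) of pi t f / m, with frequency f = 2j + 1 for even D and f = 2j + 2 for odd D;
  for odd D the last coordinate is the constant 1/sqrt D.  The odd frequencies for even D put
  every vector in the upper half plane of the first two coordinates, so no two are antipodal.\<close>

definition harmonic_freq :: "nat \<Rightarrow> nat \<Rightarrow> nat" where
  "harmonic_freq D r = (if r < 2 * (D div 2) then 2 * (r div 2) + (if even D then 1 else 2) else 0)"

definition harmonic_frame :: "nat \<Rightarrow> nat \<Rightarrow> nat \<Rightarrow> nat \<Rightarrow> real" where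
  "harmonic_frame D m t r =
     sqrt ((if r < 2 * (D div 2) then 2 else 1) / D)
     * cos (pi * t * harmonic_freq D r / m - (if even r then 0 else pi / 2))"

lemma harmonic_freq_less: "r < D \<Longrightarrow> harmonic_freq D r < D"
  unfolding harmonic_freq_def by presburger

lemma even_harmonic_freq_iff: "r < D \<Longrightarrow> even (harmonic_freq D r) \<longleftrightarrow> odd D"
  unfolding harmonic_freq_def by presburger

lemma harmonic_frame_last: "harmonic_frame D m t (2 * (D div 2)) = sqrt (1 / D)"
  by (simp add: harmonic_frame_def harmonic_freq_def)

lemma harmonic_frame_orthogonal:
  assumes "D \<le> m" "r < D" "r' < D"
  shows "(\<Sum>t<m. harmonic_frame D m t r * harmonic_frame D m t r') = (if r = r' then m / D else 0)"
proof -
  let ?K = "2 * (D div 2)" and ?p = "harmonic_freq D r" and ?q = "harmonic_freq D r'"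
  let ?c = "if even r then 0 else pi / 2" and ?c' = "if even r' then 0 else pi / 2"
  have sum_eq: "(\<Sum>t<m. harmonic_frame D m t r * harmonic_frame D m t r')
      = sqrt ((if r < ?K then 2 else 1) / D) * sqrt ((if r' < ?K then 2 else 1) / D)
        * (\<Sum>t<m. cos (pi * t * ?p / m - ?c) * cos (pi * t * ?q / m - ?c'))"
    by (simp add: harmonic_frame_def sum_distrib_left mult_ac)
  show ?thesis
  proof (cases "r < ?K \<or> r' < ?K")
    case False
    then have "r = 2 * (D div 2)" "r' = 2 * (D div 2)"
      using assms by presburger+
    then show ?thesis
      by (simp add: harmonic_frame_last)
  next
    case True
    have "even (?p + ?q)"
      using assms even_harmonic_freq_iff[of r D] even_harmonic_freq_iff[of r' D] by auto
    moreover have "0 < ?p + ?q"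
      using True by (auto simp: harmonic_freq_def)
    moreover have "?p + ?q < 2 * m"
      using assms harmonic_freq_less[of r D] harmonic_freq_less[of r' D] by linarith
    ultimately have sum_cos: "(\<Sum>t<m. cos (pi * t * ?p / m - ?c) * cos (pi * t * ?q / m - ?c'))
        = (if ?p = ?q then m / 2 * cos (?c - ?c') else 0)"
      by (rule sum_cos_mul_cos_equidistant)
    show ?thesis
    proof (cases "?p = ?q")
      case True
      then have K: "r < ?K" "r' < ?K" and "r div 2 = r' div 2"
        using \<open>r < ?K \<or> r' < ?K\<close> by (auto simp: harmonic_freq_def split: if_splits)
      then have "cos (?c - ?c') = (if r = r' then 1 else 0)"
        by auto presburger+
      moreover have "(\<Sum>t<m. harmonic_frame D m t r * harmonic_frame D m t r')
          = sqrt (2 / D) * sqrt (2 / D) * (m / 2 * cos (?c - ?c'))"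
        by (simp only: sum_eq sum_cos if_P[OF K(1)] if_P[OF K(2)] if_P[OF True])
      ultimately show ?thesis
        using assms(2) by simp
    next
      case False
      then have "r \<noteq> r'"
        by auto
      with False show ?thesis
        by (simp only: sum_eq sum_cos if_False mult_zero_right)
    qed
  qed
qed

lemma sum_lessThan_double:
  fixes f :: "nat \<Rightarrow> 'a::comm_monoid_add"
  shows "(\<Sum>r<2 * K. f r) = (\<Sum>j<K. f (2 * j) + f (2 * j + 1))"
  by (induction K) (simp_all add: algebra_simps)

lemma harmonic_frame_norm:
  assumes "0 < D"
  shows "(\<Sum>r<D. (harmonic_frame D m t r)\<^sup>2) = 1"
proof -
  let ?K = "D div 2"
  have "(harmonic_frame D m t (2 * j))\<^sup>2 + (harmonic_frame D m t (2 * j + 1))\<^sup>2 = 2 / D" if "j < ?K" for j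
  proof -
    let ?\<theta> = "pi * t * harmonic_freq D (2 * j) / m"
    have "harmonic_freq D (2 * j + 1) = harmonic_freq D (2 * j)"
      by (simp add: harmonic_freq_def)
    then have "harmonic_frame D m t (2 * j) = sqrt (2 / D) * cos ?\<theta>"
      and "harmonic_frame D m t (2 * j + 1) = sqrt (2 / D) * sin ?\<theta>"
      using that by (simp_all add: harmonic_frame_def cos_diff)
    then show ?thesis
      using sin_cos_squared_add[of ?\<theta>]
      by (simp add: power_mult_distrib add_divide_distrib[symmetric] flip: distrib_left)
  qed
  then have pairs: "(\<Sum>r<2 * ?K. (harmonic_frame D m t r)\<^sup>2) = 2 * ?K / D"
    by (simp add: sum_lessThan_double)
  show ?thesis
  proof (cases "even D")
    case True
    then show ?thesis
      using pairs assms by simp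
  next
    case False
    then have D: "D = Suc (2 * ?K)"
      by simp
    have "(harmonic_frame D m t (2 * ?K))\<^sup>2 = 1 / D"
      by (simp add: harmonic_frame_last)
    moreover have "(\<Sum>r<D. (harmonic_frame D m t r)\<^sup>2)
        = (\<Sum>r<2 * ?K. (harmonic_frame D m t r)\<^sup>2) + (harmonic_frame D m t (2 * ?K))\<^sup>2"
      by (subst D) simp
    moreover have "real D = 2 * real ?K + 1"
      using arg_cong[OF D, of real] by simp
    ultimately show ?thesis
      using pairs by (simp add: field_simps)
  qed
qed

lemma harmonic_frame_first_coordinates:
  assumes "2 \<le> D"
  shows "harmonic_frame D m t 0 = sqrt (2 / D) * cos (pi * t * harmonic_freq D 0 / m)"
    and "harmonic_frame D m t 1 = sqrt (2 / D) * sin (pi * t * harmonic_freq D 0 / m)"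
proof -
  have "1 < 2 * (D div 2)"
    using assms by presburger
  moreover from this have "harmonic_freq D 1 = harmonic_freq D 0"
    by (simp add: harmonic_freq_def)
  ultimately
  show "harmonic_frame D m t 0 = sqrt (2 / D) * cos (pi * t * harmonic_freq D 0 / m)"
    and "harmonic_frame D m t 1 = sqrt (2 / D) * sin (pi * t * harmonic_freq D 0 / m)"
    by (simp_all add: harmonic_frame_def cos_diff)
qed

lemma sin_cos_eq_imp_eq:
  fixes x y :: real
  assumes "sin x = sin y" "cos x = cos y" "\<bar>x - y\<bar> < 2 * pi"
  shows "x = y"
proof -
  obtain n :: int where n: "x = y + 2 * pi * n"
    using assms(1,2) sin_cos_eq_iff by metis
  then have "\<bar>real_of_int n\<bar> < 1"
    using assms(3) by (simp add: abs_mult)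
  then show ?thesis
    using n by simp
qed

lemma harmonic_frame_inj:
  assumes "2 \<le> D" "t < m" "t' < m"
    and "harmonic_frame D m t 0 = harmonic_frame D m t' 0"
    and "harmonic_frame D m t 1 = harmonic_frame D m t' 1"
  shows "t = t'"
proof -
  define e where "e = real (harmonic_freq D 0)"
  define q where "q = (real t - real t') / m"
  have "0 < D div 2"
    using assms(1) by simp
  then have e: "0 < e" "e \<le> 2"
    by (auto simp: e_def harmonic_freq_def)
  have m: "0 < real m"
    using assms(2) by simp
  have "0 < sqrt (2 / D)"
    using assms(1) by simp
  then have "sin (pi * t * e / m) = sin (pi * t' * e / m)" "cos (pi * t * e / m) = cos (pi * t' * e / m)"
    using assms(4,5) harmonic_frame_first_coordinates[OF assms(1), of m t] harmonic_frame_first_coordinates[OF assms(1), of m t']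
    by (simp_all add: e_def)
  moreover have "\<bar>pi * t * e / m - pi * t' * e / m\<bar> < 2 * pi"
  proof -
    have "\<bar>q\<bar> < 1"
      using assms(2,3) m by (simp add: q_def abs_less_iff field_simps)
    have "pi * t * e / m - pi * t' * e / m = pi * e * q"
      using m by (simp add: q_def field_simps)
    then have "\<bar>pi * t * e / m - pi * t' * e / m\<bar> = pi * e * \<bar>q\<bar>"
      using e by (simp add: abs_mult)
    also have "\<dots> \<le> pi * 2 * \<bar>q\<bar>"
      using e by (intro mult_right_mono mult_left_mono) auto
    also have "\<dots> < 2 * pi"
      using \<open>\<bar>q\<bar> < 1\<close> by simp
    finally show ?thesis .
  qed
  ultimately have "pi * t * e / m = pi * t' * e / m"
    by (rule sin_cos_eq_imp_eq)
  then show ?thesis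
    using e m by simp
qed

lemma harmonic_frame_not_antipodal:
  assumes "2 \<le> D" "t < m" "t' < m"
  shows "\<exists>r<D. harmonic_frame D m t r \<noteq> - harmonic_frame D m t' r"
proof (cases "even D")
  case False
  have "0 < sqrt (1 / D)"
    using assms(1) by simp
  moreover have "2 * (D div 2) < D"
    using False by presburger
  ultimately show ?thesis
    by (intro exI[of _ "2 * (D div 2)"]) (simp add: harmonic_frame_last)
next
  case True
  have "0 < D div 2"
    using assms(1) by simp
  with True have "harmonic_freq D 0 = 1"
    by (simp add: harmonic_freq_def)
  then have coords: "harmonic_frame D m s 0 = sqrt (2 / D) * cos (pi * s / m)"
    "harmonic_frame D m s 1 = sqrt (2 / D) * sin (pi * s / m)" for s
    using harmonic_frame_first_coordinates[OF assms(1), of m s] by simp_all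
  have "0 < sqrt (2 / D)"
    using assms(1) by simp
  have m: "0 < real m"
    using assms(2) by simp
  have angle: "0 \<le> pi * s / m" "pi * s / m < pi" if "s < m" for s
    using that m by (simp_all add: field_simps)
  show ?thesis
  proof (rule ccontr)
    assume "\<not> ?thesis"
    then have "\<forall>r<D. harmonic_frame D m t r = - harmonic_frame D m t' r"
      by simp
    then have "harmonic_frame D m t 0 = - harmonic_frame D m t' 0" "harmonic_frame D m t 1 = - harmonic_frame D m t' 1"
      using assms(1) by simp_all
    then have "sqrt (2 / D) * (sin (pi * t / m) + sin (pi * t' / m)) = 0"
      "sqrt (2 / D) * (cos (pi * t / m) + cos (pi * t' / m)) = 0"
      unfolding coords by (simp_all add: distrib_left)
    then have "sin (pi * t / m) = sin (pi * t' / m + pi)" "cos (pi * t / m) = cos (pi * t' / m + pi)"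
      using \<open>0 < sqrt (2 / D)\<close> by (simp_all add: add_eq_0_iff2)
    moreover have "\<bar>pi * t / m - (pi * t' / m + pi)\<bar> < 2 * pi"
      unfolding abs_less_iff using angle[OF assms(2)] angle[OF assms(3)] pi_gt_zero by linarith
    ultimately have "pi * t / m = pi * t' / m + pi"
      by (rule sin_cos_eq_imp_eq)
    then show False
      using angle[OF assms(2)] angle[OF assms(3)] by linarith
  qed
qed

lemma tight_frame_from_coordinates:
  fixes \<phi> :: "nat \<Rightarrow> nat \<Rightarrow> real"
  assumes "CARD('n::finite) = D"
    and unit: "\<And>t. t < m \<Longrightarrow> (\<Sum>r<D. (\<phi> t r)\<^sup>2) = 1"
    and distinct: "\<And>t t'. t < m \<Longrightarrow> t' < m \<Longrightarrow> \<forall>r<D. \<phi> t r = \<phi> t' r \<Longrightarrow> t = t'"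
    and not_antipodal: "\<And>t t'. t < m \<Longrightarrow> t' < m \<Longrightarrow> \<exists>r<D. \<phi> t r \<noteq> - \<phi> t' r"
    and orthogonal: "\<And>r r'. r < D \<Longrightarrow> r' < D \<Longrightarrow> (\<Sum>t<m. \<phi> t r * \<phi> t r') = (if r = r' then c else 0)"
  obtains Y :: "(real^'n) set"
  where "Y \<subseteq> sphere 0 1" "card Y = m" "Y \<inter> uminus ` Y = {}" "tight_frame Y"
proof -
  obtain \<iota> :: "'n \<Rightarrow> nat" where \<iota>: "bij_betw \<iota> UNIV {..<D}"
    using ex_bij_betw_finite_nat[of "UNIV :: 'n set"] assms(1) by (auto simp: lessThan_atLeast0)
  have all_coords: "(\<forall>i. P (\<iota> i)) \<longleftrightarrow> (\<forall>r<D. P r)" for P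
    using \<iota> unfolding bij_betw_def by (metis lessThan_iff rangeE rangeI)
  define v where "v t = (\<chi> i. \<phi> t (\<iota> i))" for t
  have inj: "inj_on v {..<m}"
  proof (rule inj_onI)
    fix t t' assume "t \<in> {..<m}" "t' \<in> {..<m}" "v t = v t'"
    then show "t = t'"
      using distinct all_coords[of "\<lambda>r. \<phi> t r = \<phi> t' r"] by (auto simp: v_def vec_eq_iff)
  qed
  have "v t \<in> sphere 0 1" if "t < m" for t
    using sum.reindex_bij_betw[OF \<iota>, of "\<lambda>r. (\<phi> t r)\<^sup>2"] unit[OF that]
    by (simp add: v_def norm_eq_1 inner_vec_def power2_eq_square)
  moreover have "v t \<noteq> - v t'" if "t < m" "t' < m" for t t'
    using not_antipodal[OF that] all_coords[of "\<lambda>r. \<phi> t r = - \<phi> t' r"]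
    by (auto simp: v_def vec_eq_iff)
  moreover have "(\<Sum>y\<in>v ` {..<m}. y $ i * y $ k) = (if i = k then c else 0)" for i k
  proof -
    have "(\<Sum>y\<in>v ` {..<m}. y $ i * y $ k) = (\<Sum>t<m. \<phi> t (\<iota> i) * \<phi> t (\<iota> k))"
      using sum.reindex[OF inj, of "\<lambda>y. y $ i * y $ k"] by (simp add: v_def)
    also have "\<dots> = (if \<iota> i = \<iota> k then c else 0)"
      using \<iota> by (intro orthogonal) (auto simp: bij_betw_def)
    finally show ?thesis
      using \<iota> by (simp add: bij_betw_def inj_eq)
  qed
  ultimately show thesis
    using inj by (intro that[of "v ` {..<m}"]) (auto simp: card_image tight_frame_def)
qed

lemma tight_frame_exists:
  assumes "2 \<le> CARD('n::finite)" "CARD('n) \<le> m"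
  obtains Y :: "(real^'n) set"
  where "Y \<subseteq> sphere 0 1" "card Y = m" "Y \<inter> uminus ` Y = {}" "tight_frame Y"
proof (rule tight_frame_from_coordinates[where \<phi> = "harmonic_frame CARD('n) m"])
  show "(\<Sum>r<CARD('n). (harmonic_frame CARD('n) m t r)\<^sup>2) = 1" for t
    by (rule harmonic_frame_norm) simp
  show "t = t'" if "t < m" "t' < m" "\<forall>r<CARD('n). harmonic_frame CARD('n) m t r = harmonic_frame CARD('n) m t' r"
    for t t'
    using assms(1) that by (intro harmonic_frame_inj[of "CARD('n)"]) auto
  show "\<exists>r<CARD('n). harmonic_frame CARD('n) m t r \<noteq> - harmonic_frame CARD('n) m t' r"
    if "t < m" "t' < m" for t t'
    using assms(1) that by (rule harmonic_frame_not_antipodal)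
  show "(\<Sum>t<m. harmonic_frame CARD('n) m t r * harmonic_frame CARD('n) m t r')
      = (if r = r' then m / CARD('n) else 0)" if "r < CARD('n)" "r' < CARD('n)" for r r'
    using assms(2) that by (rule harmonic_frame_orthogonal)
qed (use that in auto)

theorem proposition3p4:
  fixes d n :: nat
  assumes "CARD('n::finite) = d + 1"
    and "d \<ge> 1"
    and "even n"
    and "n \<ge> 2 * d + 2"
    and "\<not> (odd d \<and> n = 2 * d + 4)"
  shows "\<exists>X :: (real^'n) set. spherical_design 3 X \<and> card X = n"
proof -
  have "2 \<le> CARD('n)" "CARD('n) \<le> n div 2"
    using assms(1-4) by auto
  then obtain Y :: "(real^'n) set"
    where Y: "Y \<subseteq> sphere 0 1" "card Y = n div 2" "Y \<inter> uminus ` Y = {}" "tight_frame Y"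
    by (rule tight_frame_exists)
  then have "finite Y" "Y \<noteq> {}"
    using assms(2,4) by (auto intro: card_ge_0_finite)
  then have "spherical_design 3 (Y \<union> uminus ` Y)"
    using Y by (intro antipodal_tight_frame_spherical_design)
  moreover have "card (Y \<union> uminus ` Y) = n"
    using Y assms(3) \<open>finite Y\<close> by (simp add: card_antipodal_union)
  ultimately show ?thesis
    by blast
qed

end
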